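(* Let $\rho>0$ be a smooth function on $(0,T)\times\mathbb T^d$ and let $h$ be a smooth function on $(0,\infty)$ such that, for some constant $C_0$, $h(\rho)\ge0$, $h'(\rho)>0$, $h'(\rho)\rho\le C_0h(\rho)$ and $|h''(\rho)|\rho\le C_0h'(\rho)$. Let $\phi$ satisfy $\rho\phi'(\rho)=h'(\rho)$. Then there is a constant $C$ (depending on $C_0$) such that $$\iint h'(\rho)|\nabla(h'(\rho)\nabla\sqrt\rho)|^2+\iint\frac{(h'(\rho))^3|\nabla\sqrt\rho|^4}{\rho}\le C\iint h(\rho)|\nabla^2\phi(\rho)|^2.$$ If moreover $h'(\rho)\ge c>0$ for some constant $c$, then $$\iint|\nabla^2\sqrt\rho|^2+\iint|\nabla\rho^{1/4}|^4\le C\iint h(\rho)|\nabla^2\phi(\rho)|^2,$$ with $C$ depending also on $c$.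
   Context: $\mathbb T^d$ is the flat torus ($d\in\{2,3\}$) and $\iint$ denotes integration over $(0,T)\times\mathbb T^d$. *)

theory Defs
  imports "HOL-Analysis.Analysis"
begin

fun iter_dd :: "'a::real_normed_vector list \<Rightarrow> ('a \<Rightarrow> real) \<Rightarrow> 'a \<Rightarrow> real" where
  "iter_dd [] f = f"
| "iter_dd (v # vs) f = (\<lambda>x. frechet_derivative (iter_dd vs f) (at x) v)"

definition C_inf_on :: "'a::euclidean_space set \<Rightarrow> ('a \<Rightarrow> real) \<Rightarrow> bool" where
  "C_inf_on S f \<longleftrightarrow> (\<forall>vs. set vs \<subseteq> Basis \<longrightarrow> iter_dd vs f differentiable_on S)"

definition smooth_pos :: "(real \<Rightarrow> real) \<Rightarrow> bool" where
  "smooth_pos h \<longleftrightarrow> (\<forall>k. (deriv ^^ k) h differentiable_on {0<..})"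

text \<open>Functions of (t,x) that are 1-periodic in every space variable,
  i.e. functions on (time) x flat torus R^d/Z^d.\<close>
definition periodic_x :: "(real \<times> (real^'n) \<Rightarrow> real) \<Rightarrow> bool" where
  "periodic_x f \<longleftrightarrow> (\<forall>t x i. f (t, x + axis i 1) = f (t, x))"

definition pdx :: "'n::finite \<Rightarrow> (real \<times> (real^'n) \<Rightarrow> real) \<Rightarrow> real \<times> (real^'n) \<Rightarrow> real" where
  "pdx i f z = frechet_derivative (\<lambda>y. f (fst z, y)) (at (snd z)) (axis i 1)"

definition grad_norm2 :: "(real \<times> (real^'n::finite) \<Rightarrow> real) \<Rightarrow> real \<times> (real^'n) \<Rightarrow> real" where
  "grad_norm2 f z = (\<Sum>i\<in>UNIV. (pdx i f z)\<^sup>2)"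

definition jac_norm2 :: "('n::finite \<Rightarrow> real \<times> (real^'n) \<Rightarrow> real) \<Rightarrow> real \<times> (real^'n) \<Rightarrow> real" where
  "jac_norm2 F z = (\<Sum>i\<in>UNIV. \<Sum>j\<in>UNIV. (pdx j (F i) z)\<^sup>2)"

definition hess_norm2 :: "(real \<times> (real^'n::finite) \<Rightarrow> real) \<Rightarrow> real \<times> (real^'n) \<Rightarrow> real" where
  "hess_norm2 f z = jac_norm2 (\<lambda>i. pdx i f) z"

text \<open>(0,T) x fundamental cell of the torus\<close>
definition cyl :: "real \<Rightarrow> (real \<times> (real^'n::finite)) set" where
  "cyl T = {0<..<T} \<times> cbox 0 One"

definition hyps5p1 :: "real \<Rightarrow> real \<Rightarrow> (real \<times> (real^'n::finite) \<Rightarrow> real) \<Rightarrow> (real \<Rightarrow> real) \<Rightarrow> (real \<Rightarrow> real) \<Rightarrow> bool" where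
  "hyps5p1 C0 T \<rho> h \<phi> \<longleftrightarrow>
     C_inf_on ({0<..<T} \<times> UNIV) \<rho> \<and> periodic_x \<rho> \<and>
     (\<forall>z \<in> {0<..<T} \<times> UNIV. \<rho> z > 0) \<and>
     smooth_pos h \<and>
     (\<forall>s>0. h s \<ge> 0 \<and> deriv h s > 0 \<and> deriv h s * s \<le> C0 * h s \<and>
             \<bar>deriv (deriv h) s\<bar> * s \<le> C0 * deriv h s) \<and>
     (\<forall>s>0. (\<phi> has_real_derivative (deriv h s / s)) (at s))"

end

theory Submission
  imports Defs
begin

text \<open>Write \<open>\<sigma> = sqrt \<rho>\<close>, \<open>g = \<nabla>\<sigma>\<close>, \<open>v = h'(\<rho>) g\<close> and \<open>k = h'(\<rho>) / \<sigma>\<close>.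
  Then \<open>\<nabla>\<^sup>2\<phi>(\<rho>) = (2/\<sigma>) (\<nabla>v - k g g\<^sup>T)\<close>, so \<open>h'(\<rho>) \<rho> \<le> C0 h(\<rho>)\<close> gives
  \<open>h'(\<rho>) |\<nabla>v - k g g\<^sup>T|\<^sup>2 \<le> C0/4 h(\<rho>) |\<nabla>\<^sup>2\<phi>(\<rho>)|\<^sup>2\<close>.  A pointwise matrix inequality,
  valid in dimension at most 3, bounds \<open>|\<nabla>v|\<^sup>2 + k\<^sup>2 |g|\<^sup>4\<close> by \<open>10 |\<nabla>v - k g g\<^sup>T|\<^sup>2\<close>
  plus a multiple of \<open>div (|v|\<^sup>2 v / \<sigma>)\<close>, and the divergence integrates to zero over every
  time slice of the torus.  For the second estimate, \<open>h'(\<rho>) \<nabla>\<^sup>2\<sigma> = \<nabla>v - 2 h''(\<rho>) \<sigma> g g\<^sup>T\<close>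
  together with \<open>|h''(\<rho>)| \<rho> \<le> C0 h'(\<rho>)\<close> and \<open>h' \<ge> c\<close> reduces everything to the first one.\<close>

lemma integral_cube_shift_periodic:
  fixes G :: "'a::euclidean_space \<Rightarrow> real"
  assumes cont: "continuous_on UNIV G" and e: "e \<in> Basis" and per: "\<And>x. G (x + e) = G x"
    and s: "0 \<le> s" "s \<le> 1"
  shows "integral (cbox 0 One) (\<lambda>x. G (x + s *\<^sub>R e)) = integral (cbox 0 One) G"
proof -
  have int: "G integrable_on cbox a b" for a b
    by (rule integrable_continuous, rule continuous_on_subset[OF cont]) auto
  have shift: "integral (cbox a b) (\<lambda>x. G (x + c)) = integral (cbox (a + c) (b + c)) G" for a b c
  proof -
    have "((G \<circ> (+) c) has_integral integral (cbox (a + c) (b + c)) G) (cbox a b)"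
      using has_integral_shift_cbox_iff int has_integral_integral by blast
    then show ?thesis
      by (simp add: o_def add.commute integral_unique)
  qed
  have e_coord: "i \<in> Basis \<Longrightarrow> e \<bullet> i = (if i = e then 1 else 0)" for i
    using e by (simp add: inner_Basis)
  have mem_cbox_e: "x \<in> cbox a b \<longleftrightarrow> (a \<bullet> e \<le> x \<bullet> e \<and> x \<bullet> e \<le> b \<bullet> e)
      \<and> (\<forall>i\<in>Basis - {e}. a \<bullet> i \<le> x \<bullet> i \<and> x \<bullet> i \<le> b \<bullet> i)" for x a b
    using e by (auto simp: mem_box)
  define B where "B = cbox (s *\<^sub>R e) (One + s *\<^sub>R e)"
  define c where "c = One - (1 - s) *\<^sub>R e"
  \<comment> \<open>The part of the shifted cube \<open>B\<close> beyond \<open>x \<bullet> e = 1\<close> is the translate by the period \<open>e\<close>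
    of the part of the unit cube below \<open>x \<bullet> e = s\<close>.\<close>
  have upper: "B \<inter> {x. x \<bullet> e \<le> 1} = cbox 0 One \<inter> {x. x \<bullet> e \<ge> s}"
    unfolding B_def set_eq_iff Int_iff mem_cbox_e using s e by (simp add: inner_add_left e_coord) auto
  have overhang: "B \<inter> {x. x \<bullet> e \<ge> 1} = cbox (0 + e) (c + e)"
    unfolding B_def c_def set_eq_iff Int_iff mem_cbox_e using s e
    by (simp add: inner_add_left inner_diff_left e_coord) auto
  have lower: "cbox 0 One \<inter> {x. x \<bullet> e \<le> s} = cbox 0 c"
    unfolding c_def set_eq_iff Int_iff mem_cbox_e using s e
    by (simp add: inner_add_left inner_diff_left e_coord) auto
  have "integral (cbox 0 One) (\<lambda>x. G (x + s *\<^sub>R e)) = integral B G"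
    using shift[of 0 One "s *\<^sub>R e"] by (simp add: B_def)
  also have "\<dots> = integral (B \<inter> {x. x \<bullet> e \<le> 1}) G + integral (B \<inter> {x. x \<bullet> e \<ge> 1}) G"
    unfolding B_def by (rule integral_split[OF int e])
  also have "\<dots> = integral (cbox 0 One \<inter> {x. x \<bullet> e \<ge> s}) G + integral (cbox 0 One \<inter> {x. x \<bullet> e \<le> s}) G"
    using shift[of 0 c e] per by (simp add: upper overhang lower)
  also have "\<dots> = integral (cbox 0 One) G"
    using integral_split[OF int e, of 0 One s] by simp
  finally show ?thesis .
qed

lemma integral_cube_derivative_periodic:
  fixes G G' :: "'a::euclidean_space \<Rightarrow> real"
  assumes cont: "continuous_on UNIV G" and cont': "continuous_on UNIV G'" and e: "e \<in> Basis"
    and per: "\<And>x. G (x + e) = G x"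
    and deriv: "\<And>x. ((\<lambda>s. G (x + s *\<^sub>R e)) has_real_derivative G' x) (at 0)"
  shows "integral (cbox 0 One) G' = 0"
proof -
  \<comment> \<open>\<open>\<Psi>\<close> is constant by periodicity, and differentiating under the integral sign gives
    \<open>\<Psi>'(0) = \<integral> G'\<close>.\<close>
  define \<Psi> where "\<Psi> s = integral (cbox 0 One) (\<lambda>x. G (x + s *\<^sub>R e))" for s
  have \<Psi>_const: "\<Psi> s = \<Psi> 0" if "s \<in> {-1..1}" for s
  proof (cases "0 \<le> s")
    case True
    then show ?thesis
      using integral_cube_shift_periodic[OF cont e per, of s] that by (simp add: \<Psi>_def)
  next
    case False
    have "\<Psi> s = \<Psi> (s + 1)"
      unfolding \<Psi>_def using per[of "_ + s *\<^sub>R e"]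
      by (intro integral_cong) (simp add: scaleR_add_left add.assoc)
    also have "\<dots> = \<Psi> 0"
      using integral_cube_shift_periodic[OF cont e per, of "s + 1"] False that by (simp add: \<Psi>_def)
    finally show ?thesis .
  qed
  have deriv_at: "((\<lambda>s. G (x + s *\<^sub>R e)) has_real_derivative G' (x + s *\<^sub>R e)) (at s)" for x s
    using DERIV_shift[of "\<lambda>\<sigma>. G (x + \<sigma> *\<^sub>R e)" "G' (x + s *\<^sub>R e)" 0 s] deriv[of "x + s *\<^sub>R e"]
    by (simp add: scaleR_add_left algebra_simps)
  have "(\<Psi> has_field_derivative integral (cbox 0 One) (\<lambda>x. G' (x + 0 *\<^sub>R e))) (at 0 within {-1..1})"
    unfolding \<Psi>_def
  proof (rule leibniz_rule_field_derivative[where fx="\<lambda>s x. G' (x + s *\<^sub>R e)"])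
    show "((\<lambda>s. G (x + s *\<^sub>R e)) has_field_derivative G' (x + s *\<^sub>R e)) (at s within {-1..1})" for s x
      using deriv_at has_field_derivative_at_within by blast
    show "(\<lambda>x. G (x + s *\<^sub>R e)) integrable_on cbox 0 One" for s
      by (rule integrable_continuous, rule continuous_on_compose2[OF cont]) (auto intro!: continuous_intros)
    have "continuous_on ({-1..1} \<times> cbox 0 One) (\<lambda>z. G' (snd z + fst z *\<^sub>R e))"
      by (rule continuous_on_compose2[OF cont']) (auto intro!: continuous_intros)
    then show "continuous_on ({-1..1} \<times> cbox 0 One) (\<lambda>(s, x). G' (x + s *\<^sub>R e))"
      by (simp add: case_prod_beta)
  qed auto
  moreover have "(\<Psi> has_field_derivative 0) (at 0 within {-1..1})"
    by (rule has_field_derivative_transform_within[where f="\<lambda>_. \<Psi> 0" and d=1])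
      (auto intro!: \<Psi>_const[symmetric])
  moreover have "at (0::real) within {-1..1} = at 0"
    by (rule at_within_Icc_at) auto
  ultimately show ?thesis
    using DERIV_unique by fastforce
qed

definition x_differentiable :: "(real \<times> (real^'n::finite) \<Rightarrow> real) \<Rightarrow> real \<times> (real^'n) \<Rightarrow> bool" where
  "x_differentiable f z \<longleftrightarrow> (\<lambda>y. f (fst z, y)) differentiable (at (snd z))"

lemma pdx_eqI:
  assumes "((\<lambda>y. f (fst z, y)) has_derivative D) (at (snd z))"
  shows "pdx i f z = D (axis i 1)"
  using assms unfolding pdx_def by (metis frechet_derivative_at)

lemma x_differentiableI:
  assumes "((\<lambda>y. f (fst z, y)) has_derivative D) (at (snd z))"
  shows "x_differentiable f z"
  using assms unfolding x_differentiable_def differentiable_def by blast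

lemma x_differentiableE:
  assumes "x_differentiable f z"
  obtains D where "((\<lambda>y. f (fst z, y)) has_derivative D) (at (snd z))"
  using assms unfolding x_differentiable_def differentiable_def by blast

lemma pdx_cong:
  assumes "\<And>y. f (fst z, y) = g (fst z, y)"
  shows "pdx i f z = pdx i g z"
  using assms unfolding pdx_def by simp

lemma x_differentiable_const: "x_differentiable (\<lambda>w. c) z"
  by (rule x_differentiableI[where D="\<lambda>_. 0"]) simp

lemma pdx_const: "pdx i (\<lambda>w. c) z = 0"
  by (rule pdx_eqI[where D="\<lambda>_. 0", simplified]) simp

lemma x_differentiable_add:
  "x_differentiable f z \<Longrightarrow> x_differentiable g z \<Longrightarrow> x_differentiable (\<lambda>w. f w + g w) z"
  by (elim x_differentiableE, rule x_differentiableI, rule has_derivative_add)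

lemma pdx_add:
  assumes "x_differentiable f z" "x_differentiable g z"
  shows "pdx i (\<lambda>w. f w + g w) z = pdx i f z + pdx i g z"
proof -
  obtain Df Dg where Df: "((\<lambda>y. f (fst z, y)) has_derivative Df) (at (snd z))"
    and Dg: "((\<lambda>y. g (fst z, y)) has_derivative Dg) (at (snd z))"
    using assms by (auto elim!: x_differentiableE)
  show ?thesis
    using pdx_eqI[OF has_derivative_add[OF Df Dg]] pdx_eqI[OF Df] pdx_eqI[OF Dg] by simp
qed

lemma x_differentiable_mult:
  "x_differentiable f z \<Longrightarrow> x_differentiable g z \<Longrightarrow> x_differentiable (\<lambda>w. f w * g w) z"
  by (elim x_differentiableE, rule x_differentiableI, rule has_derivative_mult)

lemma pdx_mult:
  assumes "x_differentiable f z" "x_differentiable g z"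
  shows "pdx i (\<lambda>w. f w * g w) z = pdx i f z * g z + f z * pdx i g z"
proof -
  obtain Df Dg where Df: "((\<lambda>y. f (fst z, y)) has_derivative Df) (at (snd z))"
    and Dg: "((\<lambda>y. g (fst z, y)) has_derivative Dg) (at (snd z))"
    using assms by (auto elim!: x_differentiableE)
  show ?thesis
    using pdx_eqI[OF has_derivative_mult[OF Df Dg]] pdx_eqI[OF Df] pdx_eqI[OF Dg] by simp
qed

lemma x_differentiable_chain:
  assumes "x_differentiable f z" "(k has_real_derivative k') (at (f z))"
  shows "x_differentiable (\<lambda>w. k (f w)) z"
proof -
  obtain Df where "((\<lambda>y. f (fst z, y)) has_derivative Df) (at (snd z))"
    using assms(1) by (rule x_differentiableE)
  from has_derivative_compose[OF this, of k "(*) k'"] assms(2) show ?thesis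
    by (intro x_differentiableI) (simp add: has_field_derivative_def)
qed

lemma pdx_chain:
  assumes "x_differentiable f z" "(k has_real_derivative k') (at (f z))"
  shows "pdx i (\<lambda>w. k (f w)) z = k' * pdx i f z"
proof -
  obtain Df where Df: "((\<lambda>y. f (fst z, y)) has_derivative Df) (at (snd z))"
    using assms(1) by (rule x_differentiableE)
  have k: "(k has_derivative (*) k') (at (f (fst z, snd z)))"
    using assms(2) by (simp add: has_field_derivative_def)
  show ?thesis
    using pdx_eqI[OF has_derivative_compose[OF Df k]] pdx_eqI[OF Df] by simp
qed

lemma x_differentiable_divide:
  assumes "x_differentiable f z" "x_differentiable g z" "g z \<noteq> 0"
  shows "x_differentiable (\<lambda>w. f w / g w) z"
  using x_differentiable_mult[OF assms(1) x_differentiable_chain[OF assms(2) DERIV_inverse]] assms(3)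
  by (simp add: divide_inverse)

lemma pdx_divide:
  assumes "x_differentiable f z" "x_differentiable g z" "g z \<noteq> 0"
  shows "pdx i (\<lambda>w. f w / g w) z = (pdx i f z * g z - f z * pdx i g z) / (g z)\<^sup>2"
proof -
  have inv: "((\<lambda>x. inverse x) has_real_derivative - (inverse (g z) ^ 2)) (at (g z))"
    using DERIV_inverse[OF assms(3)] by (simp add: power2_eq_square)
  have "pdx i (\<lambda>w. f w / g w) z = pdx i (\<lambda>w. f w * inverse (g w)) z"
    by (simp add: divide_inverse)
  also have "\<dots> = pdx i f z * inverse (g z) - f z * inverse (g z) ^ 2 * pdx i g z"
    using pdx_mult[OF assms(1) x_differentiable_chain[OF assms(2) inv]] pdx_chain[OF assms(2) inv]
    by simp
  also have "\<dots> = (pdx i f z * g z - f z * pdx i g z) / (g z)\<^sup>2"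
    using assms(3) by (simp add: field_simps power2_eq_square)
  finally show ?thesis .
qed

lemma x_differentiable_sum:
  "finite A \<Longrightarrow> (\<And>j. j \<in> A \<Longrightarrow> x_differentiable (F j) z) \<Longrightarrow> x_differentiable (\<lambda>w. \<Sum>j\<in>A. F j w) z"
  by (induction A rule: finite_induct) (auto intro: x_differentiable_add x_differentiable_const)

lemma pdx_sum:
  "finite A \<Longrightarrow> (\<And>j. j \<in> A \<Longrightarrow> x_differentiable (F j) z) \<Longrightarrow>
    pdx i (\<lambda>w. \<Sum>j\<in>A. F j w) z = (\<Sum>j\<in>A. pdx i (F j) z)"
  by (induction A rule: finite_induct) (simp_all add: pdx_const pdx_add x_differentiable_sum)

lemma pdx_has_real_derivative_along_axis:
  assumes "x_differentiable f z"
  shows "((\<lambda>s. f (fst z, snd z + s *\<^sub>R axis i 1)) has_real_derivative pdx i f z) (at 0)"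
proof -
  obtain Df where Df: "((\<lambda>y. f (fst z, y)) has_derivative Df) (at (snd z))"
    using assms by (rule x_differentiableE)
  have "((\<lambda>s::real. snd z + s *\<^sub>R axis i 1) has_derivative (\<lambda>s. s *\<^sub>R axis i 1)) (at 0)"
    by (auto intro!: derivative_eq_intros)
  from has_derivative_compose[OF this, of "\<lambda>y. f (fst z, y)" Df] Df
  have "((\<lambda>s. f (fst z, snd z + s *\<^sub>R axis i 1)) has_derivative (\<lambda>s. Df (s *\<^sub>R axis i 1))) (at 0)"
    by simp
  moreover have "(\<lambda>s. Df (s *\<^sub>R axis i 1)) = (*) (pdx i f z)"
    using pdx_eqI[OF Df] linear_scale[OF has_derivative_linear[OF Df]] by (auto simp: fun_eq_iff)
  ultimately show ?thesis
    by (simp add: has_field_derivative_def)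
qed

lemma
  assumes "f differentiable (at z)"
  shows x_differentiable_if_differentiable: "x_differentiable f z"
    and pdx_eq_frechet_derivative: "pdx i f z = frechet_derivative f (at z) (0, axis i 1)"
proof -
  have D: "(f has_derivative frechet_derivative f (at z)) (at (fst z, snd z))"
    using assms frechet_derivative_works[of f "at z"] by simp
  have "((\<lambda>y. (fst z, y)) has_derivative (\<lambda>v. (0, v))) (at (snd z))"
    by (auto intro!: derivative_eq_intros)
  from has_derivative_compose[OF this D]
  have "((\<lambda>y. f (fst z, y)) has_derivative (\<lambda>v. frechet_derivative f (at z) (0, v))) (at (snd z))"
    by simp
  then show "x_differentiable f z" "pdx i f z = frechet_derivative f (at z) (0, axis i 1)"
    using x_differentiableI pdx_eqI by blast+
qed

lemma frechet_derivative_periodic: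
  assumes per: "\<And>w. f (w + c) = f w" and diff: "f differentiable (at (z + c))"
  shows "frechet_derivative f (at z) = frechet_derivative f (at (z + c))"
proof -
  have "((\<lambda>w. w + c) has_derivative (\<lambda>x. x)) (at z)"
    by (auto intro!: derivative_eq_intros)
  from has_derivative_compose[OF this frechet_derivative_works[THEN iffD1, OF diff]]
  have "(f has_derivative frechet_derivative f (at (z + c))) (at z)"
    using per by simp
  then show ?thesis
    by (metis frechet_derivative_at)
qed

definition mat_norm2 :: "('n::finite \<Rightarrow> 'n \<Rightarrow> real) \<Rightarrow> real" where
  "mat_norm2 M = (\<Sum>i\<in>UNIV. \<Sum>j\<in>UNIV. (M i j)\<^sup>2)"

definition vec_norm2 :: "('n::finite \<Rightarrow> real) \<Rightarrow> real" where
  "vec_norm2 v = (\<Sum>i\<in>UNIV. (v i)\<^sup>2)"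

definition quad_form :: "('n::finite \<Rightarrow> 'n \<Rightarrow> real) \<Rightarrow> ('n \<Rightarrow> real) \<Rightarrow> real" where
  "quad_form M v = (\<Sum>i\<in>UNIV. \<Sum>j\<in>UNIV. v i * M i j * v j)"

definition mat_trace :: "('n::finite \<Rightarrow> 'n \<Rightarrow> real) \<Rightarrow> real" where
  "mat_trace M = (\<Sum>j\<in>UNIV. M j j)"

lemma mat_norm2_nonneg: "0 \<le> mat_norm2 M"
  by (simp add: mat_norm2_def sum_nonneg)

lemma vec_norm2_nonneg: "0 \<le> vec_norm2 v"
  by (simp add: vec_norm2_def sum_nonneg)

lemma mat_norm2_scale: "mat_norm2 (\<lambda>i j. c * M i j) = c\<^sup>2 * mat_norm2 M"
  by (simp add: mat_norm2_def power_mult_distrib sum_distrib_left)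

lemma mat_norm2_rank_one_shift:
  fixes D :: "'n::finite \<Rightarrow> 'n \<Rightarrow> real"
  shows "mat_norm2 (\<lambda>i j. x * D i j - y * (g i * g j) - (if i = j then z else 0))
    = x\<^sup>2 * mat_norm2 D + y\<^sup>2 * (vec_norm2 g)\<^sup>2 - 2 * x * y * quad_form D g
      - 2 * x * z * mat_trace D + 2 * y * z * vec_norm2 g + z\<^sup>2 * real CARD('n)"
proof -
  have entry: "(x * D i j - y * (g i * g j) - (if i = j then z else 0))\<^sup>2 =
     x\<^sup>2 * (D i j)\<^sup>2 + y\<^sup>2 * ((g i)\<^sup>2 * (g j)\<^sup>2) - 2 * x * y * (g i * D i j * g j)
     - (if i = j then 2 * x * z * D j j else 0) + (if i = j then 2 * y * z * (g i)\<^sup>2 else 0)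
     + (if i = j then z\<^sup>2 else 0)" for i j
    by (cases "i = j") (simp_all add: power2_eq_square algebra_simps)
  have "(\<Sum>i\<in>UNIV. (g i)\<^sup>2 * (\<Sum>j\<in>UNIV. (g j)\<^sup>2)) = (vec_norm2 g)\<^sup>2"
    by (simp add: vec_norm2_def power2_eq_square[of "sum _ _"] sum_distrib_right)
  then show ?thesis
    unfolding mat_norm2_def vec_norm2_def quad_form_def mat_trace_def entry
    by (simp add: sum.distrib sum_subtractf sum_distrib_left[symmetric] sum.If_cases)
qed

text \<open>The coefficients come from the square
  \<open>|G\<^sup>2 D - (P + 5/27 k G\<^sup>2) g g\<^sup>T + 5/27 k G\<^sup>3 I|\<^sup>2 \<ge> 0\<close> (with \<open>G = |g|\<^sup>2\<close>, \<open>P = g\<^sup>T D g\<close>)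
  and a completed square in \<open>P\<close>; the dimension enters only through \<open>|I|\<^sup>2 = CARD('n) \<le> 3\<close>.\<close>

lemma rank_one_trace_inequality:
  fixes D :: "'n::finite \<Rightarrow> 'n \<Rightarrow> real"
  assumes card: "CARD('n) \<le> 3"
  shows "0 \<le> 9/10 * mat_norm2 D - 4/3 * k * quad_form D g + 1/3 * k * vec_norm2 g * mat_trace D
    + 17/30 * k\<^sup>2 * (vec_norm2 g)\<^sup>2"
proof (cases "vec_norm2 g = 0")
  case True
  then have "g = (\<lambda>_. 0)"
    unfolding vec_norm2_def by (subst (asm) sum_nonneg_eq_0_iff) auto
  with True show ?thesis
    by (simp add: quad_form_def mat_norm2_nonneg)
next
  case False
  define N where "N = mat_norm2 D"
  define P where "P = quad_form D g"
  define t where "t = mat_trace D"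
  define G where "G = vec_norm2 g"
  define X where "X = P + 5/27 * k * G\<^sup>2"
  define Y where "Y = k * G\<^sup>2"
  define d where "d = real CARD('n)"
  define c where "c = 4/3 * (5/27) + 17/30 - 9/10 * (5/27)\<^sup>2 * d"
  have G: "G > 0"
    using False vec_norm2_nonneg by (simp add: G_def order_less_le)
  have "0 \<le> mat_norm2 (\<lambda>i j. G\<^sup>2 * D i j - X * (g i * g j) - (if i = j then - (5/27 * k * G^3) else 0))"
    by (rule mat_norm2_nonneg)
  also have "\<dots> = G^4 * N - G\<^sup>2 * X\<^sup>2 + 2 * (5/27) * k * G^5 * t + (5/27)\<^sup>2 * k\<^sup>2 * G^6 * d"
    unfolding mat_norm2_rank_one_shift N_def[symmetric] G_def[symmetric] P_def[symmetric]
      t_def[symmetric] d_def[symmetric] X_def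
    by algebra
  finally have square: "0 \<le> G^4 * N - G\<^sup>2 * X\<^sup>2 + 2 * (5/27) * k * G^5 * t + (5/27)\<^sup>2 * k\<^sup>2 * G^6 * d" .
  have "c \<ge> 360/729"
    using card by (simp add: c_def d_def power2_eq_square)
  then have quadratic: "0 \<le> 9/10 * X\<^sup>2 - 4/3 * X * Y + c * Y\<^sup>2"
    using zero_le_power2[of "X - 20/27 * Y"] zero_le_power2[of Y] mult_right_mono[of "360/729" c "Y\<^sup>2"]
    by (simp add: power2_eq_square algebra_simps)
  have "G^4 * (9/10 * N - 4/3 * k * P + 1/3 * k * G * t + 17/30 * k\<^sup>2 * G\<^sup>2) =
      9/10 * (G^4 * N - G\<^sup>2 * X\<^sup>2 + 2 * (5/27) * k * G^5 * t + (5/27)\<^sup>2 * k\<^sup>2 * G^6 * d)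
      + G\<^sup>2 * (9/10 * X\<^sup>2 - 4/3 * X * Y + c * Y\<^sup>2)"
    unfolding X_def Y_def c_def by algebra
  also have "\<dots> \<ge> 0"
    by (rule add_nonneg_nonneg[OF mult_nonneg_nonneg[OF _ square] mult_nonneg_nonneg[OF _ quadratic]])
      simp_all
  finally show ?thesis
    using G by (simp add: N_def P_def t_def G_def zero_le_mult_iff)
qed

lemma mat_norm2_le_rank_one_defect:
  fixes D :: "'n::finite \<Rightarrow> 'n \<Rightarrow> real"
  assumes card: "CARD('n) \<le> 3"
  shows "mat_norm2 D + k\<^sup>2 * (vec_norm2 g)\<^sup>2
    \<le> 10 * mat_norm2 (\<lambda>i j. D i j - k * (g i * g j))
      + 10/3 * k * (2 * quad_form D g + vec_norm2 g * mat_trace D - k * (vec_norm2 g)\<^sup>2)"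
proof -
  define N where "N = mat_norm2 D"
  define P where "P = quad_form D g"
  define t where "t = mat_trace D"
  define G where "G = vec_norm2 g"
  define Q where "Q = 9/10 * N - 4/3 * k * P + 1/3 * k * G * t + 17/30 * k\<^sup>2 * G\<^sup>2"
  have defect: "mat_norm2 (\<lambda>i j. D i j - k * (g i * g j)) = N - 2 * k * P + k\<^sup>2 * G\<^sup>2"
    using mat_norm2_rank_one_shift[of 1 D k g 0] by (simp add: N_def P_def G_def)
  have "0 \<le> Q"
    unfolding Q_def N_def P_def t_def G_def by (rule rank_one_trace_inequality[OF card])
  moreover have "10 * (N - 2 * k * P + k\<^sup>2 * G\<^sup>2) + 10/3 * k * (2 * P + G * t - k * G\<^sup>2)
      = N + k\<^sup>2 * G\<^sup>2 + 10 * Q"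
    unfolding Q_def by algebra
  ultimately show ?thesis
    unfolding N_def[symmetric] P_def[symmetric] t_def[symmetric] G_def[symmetric] defect
    by linarith
qed

lemma mat_norm2_le_of_rank_one_correction:
  fixes D H :: "'n::finite \<Rightarrow> 'n \<Rightarrow> real"
  assumes a: "0 < a" and u: "0 < u" and b: "\<bar>b\<bar> * u\<^sup>2 \<le> C0 * a"
    and H: "\<And>i j. a * H i j = D i j - 2 * b * u * (g i * g j)"
  shows "mat_norm2 H \<le> 2 * mat_norm2 D / a\<^sup>2 + 8 * C0\<^sup>2 * (vec_norm2 g)\<^sup>2 / u\<^sup>2"
proof -
  have "(\<bar>b\<bar> * u\<^sup>2)\<^sup>2 \<le> (C0 * a)\<^sup>2"
    using b by (intro power_mono) auto
  then have b2: "b\<^sup>2 * u\<^sup>2 \<le> C0\<^sup>2 * a\<^sup>2 / u\<^sup>2"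
    using u by (simp add: field_simps power_mult_distrib power2_abs flip: power_add)
  have "a\<^sup>2 * mat_norm2 H = mat_norm2 (\<lambda>i j. D i j - 2 * b * u * (g i * g j))"
    unfolding mat_norm2_def by (simp add: sum_distrib_left flip: H power_mult_distrib)
  also have "\<dots> \<le> (\<Sum>i\<in>UNIV. \<Sum>j\<in>UNIV. 2 * (D i j)\<^sup>2 + 8 * (b\<^sup>2 * u\<^sup>2) * ((g i)\<^sup>2 * (g j)\<^sup>2))"
    unfolding mat_norm2_def
    using zero_le_power2[of "D _ _ + 2 * b * u * (g _ * g _)"]
    by (intro sum_mono) (simp add: power2_eq_square algebra_simps)
  also have "\<dots> = 2 * mat_norm2 D + 8 * (b\<^sup>2 * u\<^sup>2) * (vec_norm2 g)\<^sup>2"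
    unfolding mat_norm2_def vec_norm2_def power2_eq_square[of "sum _ _"] sum_product
    by (simp add: sum.distrib sum_distrib_left)
  also have "\<dots> \<le> 2 * mat_norm2 D + 8 * (C0\<^sup>2 * a\<^sup>2 / u\<^sup>2) * (vec_norm2 g)\<^sup>2"
    using b2 by (intro add_left_mono mult_right_mono mult_left_mono) auto
  finally show ?thesis
    using a by (simp add: field_simps)
qed

lemma mat_norm2_plus_vec_norm2_le_of_rank_one_correction:
  fixes D H :: "'n::finite \<Rightarrow> 'n \<Rightarrow> real"
  assumes c: "0 < c" "c \<le> a" and u: "0 < u" and b: "\<bar>b\<bar> * u\<^sup>2 \<le> C0 * a"
    and H: "\<And>i j. a * H i j = D i j - 2 * b * u * (g i * g j)"
  shows "mat_norm2 H + (vec_norm2 g / (4 * u))\<^sup>2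
    \<le> (3 + 8 * C0\<^sup>2) / c^3 * (a * mat_norm2 D + a^3 * (vec_norm2 g)\<^sup>2 / u\<^sup>2)"
proof -
  define N where "N = mat_norm2 D"
  define G where "G = vec_norm2 g"
  have a: "a > 0" and ac: "c^3 \<le> a^3"
    using c by (auto intro: power_mono)
  have "2 * N / a\<^sup>2 \<le> 2 / c^3 * (a * N)"
  proof -
    have "2 * N / a\<^sup>2 = 2 * (a * N) / a^3"
      using a by (simp add: power2_eq_square power3_eq_cube)
    also have "\<dots> \<le> 2 * (a * N) / c^3"
      using a ac c N_def mat_norm2_nonneg[of D] by (intro divide_left_mono) auto
    finally show ?thesis
      by simp
  qed
  moreover have "8 * C0\<^sup>2 * G\<^sup>2 / u\<^sup>2 + (G / (4 * u))\<^sup>2 = (8 * C0\<^sup>2 + 1/16) * (G\<^sup>2 / u\<^sup>2)"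
    using u by (simp add: power_divide power_mult_distrib field_simps)
  ultimately have "mat_norm2 H + (G / (4 * u))\<^sup>2 \<le> 2 / c^3 * (a * N) + (8 * C0\<^sup>2 + 1/16) * (G\<^sup>2 / u\<^sup>2)"
    using mat_norm2_le_of_rank_one_correction[where H=H and D=D and g=g, OF a u b H] unfolding N_def[symmetric] G_def[symmetric]
    by linarith
  also have "\<dots> \<le> (3 + 8 * C0\<^sup>2) / c^3 * (a * N) + (3 + 8 * C0\<^sup>2) / c^3 * (a^3 * G\<^sup>2 / u\<^sup>2)"
  proof (intro add_mono)
    show "2 / c^3 * (a * N) \<le> (3 + 8 * C0\<^sup>2) / c^3 * (a * N)"
      using a c N_def mat_norm2_nonneg[of D] by (intro mult_right_mono divide_right_mono) auto
    have "(8 * C0\<^sup>2 + 1/16) * (G\<^sup>2 / u\<^sup>2) \<le> (3 + 8 * C0\<^sup>2) * (G\<^sup>2 / u\<^sup>2)"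
      by (intro mult_right_mono) auto
    also have "\<dots> \<le> (3 + 8 * C0\<^sup>2) * (G\<^sup>2 / u\<^sup>2) * (a^3 / c^3)"
      using ac c mult_left_mono[of 1 "a^3 / c^3" "(3 + 8 * C0\<^sup>2) * (G\<^sup>2 / u\<^sup>2)"] by simp
    finally show "(8 * C0\<^sup>2 + 1/16) * (G\<^sup>2 / u\<^sup>2) \<le> (3 + 8 * C0\<^sup>2) / c^3 * (a^3 * G\<^sup>2 / u\<^sup>2)"
      by (simp add: ac_simps)
  qed
  finally show ?thesis
    by (simp add: N_def G_def distrib_left)
qed

locale torus_density =
  fixes C0 T :: real and \<rho> :: "real \<times> (real^'n::finite) \<Rightarrow> real" and h \<phi> :: "real \<Rightarrow> real"
  assumes hyps: "hyps5p1 C0 T \<rho> h \<phi>"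
begin

definition U :: "(real \<times> (real^'n)) set" where
  "U = {0<..<T} \<times> UNIV"

definition space_axis :: "'n \<Rightarrow> real \<times> (real^'n)" where
  "space_axis i = (0, axis i 1)"

definition drho :: "'n \<Rightarrow> real \<times> (real^'n) \<Rightarrow> real" where
  "drho i = iter_dd [space_axis i] \<rho>"

definition ddrho :: "'n \<Rightarrow> 'n \<Rightarrow> real \<times> (real^'n) \<Rightarrow> real" where
  "ddrho i j = iter_dd [space_axis j, space_axis i] \<rho>"

lemma open_U: "open U"
  unfolding U_def by (intro open_Times) auto

lemma cyl_subset_U: "cyl T \<subseteq> U"
  unfolding cyl_def U_def by auto

lemma slice_in_U: "z \<in> U \<Longrightarrow> (fst z, y) \<in> U"
  by (auto simp: U_def)

lemma space_axis_in_Basis: "space_axis i \<in> Basis"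
  by (auto simp: space_axis_def Basis_prod_def)

lemma rho_pos: "z \<in> U \<Longrightarrow> 0 < \<rho> z"
  using hyps by (auto simp: hyps5p1_def U_def)

lemma rho_periodic: "\<rho> (z + space_axis i) = \<rho> z"
  using hyps by (cases z) (auto simp: hyps5p1_def periodic_x_def space_axis_def)

lemma iter_dd_differentiable:
  assumes "set vs \<subseteq> Basis" "z \<in> U"
  shows "iter_dd vs \<rho> differentiable (at z)"
proof -
  have "iter_dd vs \<rho> differentiable_on U"
    using hyps assms(1) by (auto simp: hyps5p1_def C_inf_on_def U_def)
  then show ?thesis
    using assms(2) open_U by (simp add: differentiable_on_eq_differentiable_at)
qed

lemma continuous_on_iter_dd: "set vs \<subseteq> Basis \<Longrightarrow> continuous_on U (iter_dd vs \<rho>)"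
  using iter_dd_differentiable open_U
  by (meson continuous_at_imp_continuous_on differentiable_imp_continuous_within)

lemma continuous_on_rho: "continuous_on U \<rho>"
  using continuous_on_iter_dd[of "[]"] by simp

lemma continuous_on_drho: "continuous_on U (drho i)"
  using continuous_on_iter_dd[of "[space_axis i]"] space_axis_in_Basis by (simp add: drho_def)

lemma continuous_on_ddrho: "continuous_on U (ddrho i j)"
  using continuous_on_iter_dd[of "[space_axis j, space_axis i]"] space_axis_in_Basis
  by (simp add: ddrho_def)

lemma rho_differentiable: "z \<in> U \<Longrightarrow> \<rho> differentiable (at z)"
  using iter_dd_differentiable[of "[]"] by simp

lemma x_differentiable_rho: "z \<in> U \<Longrightarrow> x_differentiable \<rho> z"
  by (rule x_differentiable_if_differentiable[OF rho_differentiable])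

lemma pdx_rho: "z \<in> U \<Longrightarrow> pdx i \<rho> z = drho i z"
  using pdx_eq_frechet_derivative[OF rho_differentiable] by (simp add: drho_def space_axis_def)

lemma
  assumes "z \<in> U"
  shows x_differentiable_drho: "x_differentiable (drho i) z"
    and pdx_drho: "pdx j (drho i) z = ddrho i j z"
  using iter_dd_differentiable[of "[space_axis i]", OF _ assms] space_axis_in_Basis
    x_differentiable_if_differentiable pdx_eq_frechet_derivative
  by (simp_all add: drho_def ddrho_def space_axis_def)

lemma drho_periodic: "z \<in> U \<Longrightarrow> drho j (z + space_axis i) = drho j z"
  using frechet_derivative_periodic[OF rho_periodic rho_differentiable, of z i]
  by (cases z) (simp add: drho_def U_def space_axis_def)

lemma deriv_h_differentiable: "0 < s \<Longrightarrow> (deriv ^^ k) h differentiable (at s)"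
  using hyps by (simp add: hyps5p1_def smooth_pos_def differentiable_on_eq_differentiable_at)

lemma continuous_on_deriv_h_rho: "continuous_on U (\<lambda>z. (deriv ^^ k) h (\<rho> z))"
proof (rule continuous_on_compose2[OF _ continuous_on_rho])
  show "continuous_on {0<..} ((deriv ^^ k) h)"
    using deriv_h_differentiable
    by (meson continuous_at_imp_continuous_on differentiable_imp_continuous_within greaterThan_iff)
qed (auto dest: rho_pos)

lemma h_bounds:
  assumes "0 < s"
  shows "0 \<le> h s" "0 < deriv h s" "deriv h s * s \<le> C0 * h s" "\<bar>deriv (deriv h) s\<bar> * s \<le> C0 * deriv h s"
  using hyps assms by (auto simp: hyps5p1_def)

lemma phi_has_derivative: "0 < s \<Longrightarrow> (\<phi> has_real_derivative deriv h s / s) (at s)"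
  using hyps by (auto simp: hyps5p1_def)

lemma C0_pos: "0 < C0"
  using h_bounds[of 1] by (smt (verit) mult_nonpos_nonneg)

text \<open>The first and second space derivatives of \<open>\<sigma> = sqrt \<rho>\<close>, of \<open>v = h'(\<rho>) \<nabla>\<sigma>\<close> and of
  \<open>\<phi>(\<rho>)\<close> are introduced by closed formulas (the index \<open>j\<close> is the direction of differentiation);
  the lemmas below identify them with the corresponding \<open>pdx\<close> expressions.\<close>

definition dh :: "real \<times> (real^'n) \<Rightarrow> real" where
  "dh z = deriv h (\<rho> z)"

definition ddh :: "real \<times> (real^'n) \<Rightarrow> real" where
  "ddh z = deriv (deriv h) (\<rho> z)"

definition \<sigma> :: "real \<times> (real^'n) \<Rightarrow> real" where
  "\<sigma> z = sqrt (\<rho> z)"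

definition g :: "'n \<Rightarrow> real \<times> (real^'n) \<Rightarrow> real" where
  "g i z = drho i z / (2 * \<sigma> z)"

definition v :: "'n \<Rightarrow> real \<times> (real^'n) \<Rightarrow> real" where
  "v i z = dh z * g i z"

definition H\<sigma> :: "'n \<Rightarrow> 'n \<Rightarrow> real \<times> (real^'n) \<Rightarrow> real" where
  "H\<sigma> i j z = (ddrho i j z - 2 * g i z * g j z) / (2 * \<sigma> z)"

definition Dv :: "'n \<Rightarrow> 'n \<Rightarrow> real \<times> (real^'n) \<Rightarrow> real" where
  "Dv i j z = ddh z * drho j z * g i z + dh z * H\<sigma> i j z"

definition H\<phi> :: "'n \<Rightarrow> 'n \<Rightarrow> real \<times> (real^'n) \<Rightarrow> real" where
  "H\<phi> i j z = 2 * (Dv i j z - v i z * g j z / \<sigma> z) / \<sigma> z"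

definition flux :: "'n \<Rightarrow> real \<times> (real^'n) \<Rightarrow> real" where
  "flux j z = vec_norm2 (\<lambda>i. v i z) * v j z / \<sigma> z"

definition div_flux :: "real \<times> (real^'n) \<Rightarrow> real" where
  "div_flux z = (\<Sum>j\<in>UNIV. pdx j (flux j) z)"

lemma \<sigma>_pos: "z \<in> U \<Longrightarrow> 0 < \<sigma> z"
  by (simp add: \<sigma>_def rho_pos)

lemma \<sigma>_squared: "z \<in> U \<Longrightarrow> (\<sigma> z)\<^sup>2 = \<rho> z"
  using rho_pos by (simp add: \<sigma>_def less_imp_le)

lemma dh_pos: "z \<in> U \<Longrightarrow> 0 < dh z"
  using h_bounds(2)[OF rho_pos] by (simp add: dh_def)

lemma
  assumes z: "z \<in> U"
  shows x_differentiable_\<sigma>: "x_differentiable \<sigma> z"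
    and pdx_\<sigma>: "pdx i \<sigma> z = g i z"
proof -
  have sqrt: "(sqrt has_real_derivative inverse (sqrt (\<rho> z)) / 2) (at (\<rho> z))"
    by (rule DERIV_real_sqrt[OF rho_pos[OF z]])
  show "x_differentiable \<sigma> z"
    using x_differentiable_chain[OF x_differentiable_rho[OF z] sqrt] by (simp add: \<sigma>_def[abs_def])
  show "pdx i \<sigma> z = g i z"
    using pdx_chain[OF x_differentiable_rho[OF z] sqrt] pdx_rho[OF z] \<sigma>_pos[OF z]
    by (simp add: \<sigma>_def[abs_def] g_def field_simps)
qed

lemma
  assumes z: "z \<in> U"
  shows x_differentiable_g: "x_differentiable (g i) z"
    and pdx_g: "pdx j (g i) z = H\<sigma> i j z"
proof -
  have g_eq: "g i = (\<lambda>w. drho i w / (2 * \<sigma> w))"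
    by (simp add: fun_eq_iff g_def)
  have two_\<sigma>: "x_differentiable (\<lambda>w. 2 * \<sigma> w) z" "pdx j (\<lambda>w. 2 * \<sigma> w) z = 2 * g j z"
    using x_differentiable_mult[OF x_differentiable_const x_differentiable_\<sigma>[OF z]]
      pdx_mult[OF x_differentiable_const x_differentiable_\<sigma>[OF z]]
    by (simp_all add: pdx_const pdx_\<sigma>[OF z])
  have nz: "2 * \<sigma> z \<noteq> 0"
    using \<sigma>_pos[OF z] by simp
  show "x_differentiable (g i) z"
    unfolding g_eq by (rule x_differentiable_divide[OF x_differentiable_drho[OF z] two_\<sigma>(1) nz])
  show "pdx j (g i) z = H\<sigma> i j z"
    unfolding g_eq pdx_divide[OF x_differentiable_drho[OF z] two_\<sigma>(1) nz] two_\<sigma>(2) pdx_drho[OF z]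
    using \<sigma>_pos[OF z] by (simp add: H\<sigma>_def g_def field_simps power2_eq_square)
qed

lemma
  assumes z: "z \<in> U"
  shows x_differentiable_dh: "x_differentiable dh z"
    and pdx_dh: "pdx j dh z = ddh z * drho j z"
proof -
  have "(deriv h has_real_derivative ddh z) (at (\<rho> z))"
    using deriv_h_differentiable[OF rho_pos[OF z], of 1]
    by (simp add: ddh_def DERIV_deriv_iff_real_differentiable)
  then show "x_differentiable dh z" "pdx j dh z = ddh z * drho j z"
    using x_differentiable_chain[OF x_differentiable_rho[OF z]] pdx_chain[OF x_differentiable_rho[OF z]]
    by (simp_all add: dh_def[abs_def] pdx_rho[OF z])
qed

lemma
  assumes z: "z \<in> U"
  shows x_differentiable_v: "x_differentiable (v i) z"
    and pdx_v: "pdx j (v i) z = Dv i j z"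
  using x_differentiable_mult[OF x_differentiable_dh[OF z] x_differentiable_g[OF z]]
    pdx_mult[OF x_differentiable_dh[OF z] x_differentiable_g[OF z]]
  by (simp_all add: v_def[abs_def] Dv_def pdx_dh[OF z] pdx_g[OF z])

lemma
  assumes z: "z \<in> U"
  shows x_differentiable_flux: "x_differentiable (flux j) z"
    and pdx_flux: "pdx j (flux j) z = (2 * (\<Sum>i\<in>UNIV. v i z * Dv i j z) * v j z
      + vec_norm2 (\<lambda>i. v i z) * Dv j j z) / \<sigma> z - vec_norm2 (\<lambda>i. v i z) * v j z * g j z / (\<sigma> z)\<^sup>2"
proof -
  define S where "S w = (\<Sum>i\<in>UNIV. v i w * v i w)" for w
  have S: "x_differentiable S z" "pdx j S z = 2 * (\<Sum>i\<in>UNIV. v i z * Dv i j z)"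
    using x_differentiable_sum[of UNIV "\<lambda>i w. v i w * v i w"]
      pdx_sum[of UNIV "\<lambda>i w. v i w * v i w"]
    by (simp_all add: S_def[abs_def] x_differentiable_mult x_differentiable_v[OF z]
        pdx_mult pdx_v[OF z] sum_distrib_left)
  have flux_eq: "flux j = (\<lambda>w. S w * v j w / \<sigma> w)"
    by (simp add: fun_eq_iff flux_def S_def vec_norm2_def power2_eq_square)
  have Sv: "x_differentiable (\<lambda>w. S w * v j w) z"
    by (rule x_differentiable_mult[OF S(1) x_differentiable_v[OF z]])
  have nz: "\<sigma> z \<noteq> 0"
    using \<sigma>_pos[OF z] by simp
  show "x_differentiable (flux j) z"
    unfolding flux_eq by (rule x_differentiable_divide[OF Sv x_differentiable_\<sigma>[OF z] nz])
  have "pdx j (flux j) z = (pdx j (\<lambda>w. S w * v j w) z * \<sigma> z - S z * v j z * pdx j \<sigma> z) / (\<sigma> z)\<^sup>2"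
    unfolding flux_eq by (rule pdx_divide[OF Sv x_differentiable_\<sigma>[OF z] nz])
  also have "\<dots> = ((2 * (\<Sum>i\<in>UNIV. v i z * Dv i j z) * v j z + S z * Dv j j z) * \<sigma> z
      - S z * v j z * g j z) / (\<sigma> z)\<^sup>2"
    by (simp add: pdx_mult[OF S(1) x_differentiable_v[OF z]] S(2) pdx_v[OF z] pdx_\<sigma>[OF z])
  finally show "pdx j (flux j) z = (2 * (\<Sum>i\<in>UNIV. v i z * Dv i j z) * v j z
      + vec_norm2 (\<lambda>i. v i z) * Dv j j z) / \<sigma> z - vec_norm2 (\<lambda>i. v i z) * v j z * g j z / (\<sigma> z)\<^sup>2"
    using nz by (simp add: S_def vec_norm2_def power2_eq_square diff_divide_distrib)
qed

lemma div_flux_eq: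
  assumes z: "z \<in> U"
  defines "k \<equiv> dh z / \<sigma> z"
  shows "div_flux z = dh z * k * (2 * quad_form (\<lambda>i j. Dv i j z) (\<lambda>i. g i z)
      + vec_norm2 (\<lambda>i. g i z) * mat_trace (\<lambda>i j. Dv i j z) - k * (vec_norm2 (\<lambda>i. g i z))\<^sup>2)"
proof -
  define G where "G = vec_norm2 (\<lambda>i. g i z)"
  define P where "P = quad_form (\<lambda>i j. Dv i j z) (\<lambda>i. g i z)"
  define V where "V = vec_norm2 (\<lambda>i. v i z)"
  have V: "V = (dh z)\<^sup>2 * G"
    by (simp add: V_def G_def vec_norm2_def v_def power_mult_distrib sum_distrib_left)
  have "(\<Sum>j\<in>UNIV. 2 * (\<Sum>i\<in>UNIV. v i z * Dv i j z) * v j z)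
      = (\<Sum>j\<in>UNIV. \<Sum>i\<in>UNIV. 2 * (dh z)\<^sup>2 * (g i z * Dv i j z * g j z))"
    by (simp add: v_def sum_distrib_left sum_distrib_right power2_eq_square ac_simps)
  also have "\<dots> = 2 * (dh z)\<^sup>2 * P"
    unfolding P_def quad_form_def by (subst sum.swap) (simp add: sum_distrib_left)
  finally have first: "(\<Sum>j\<in>UNIV. 2 * (\<Sum>i\<in>UNIV. v i z * Dv i j z) * v j z + V * Dv j j z)
      = 2 * (dh z)\<^sup>2 * P + (dh z)\<^sup>2 * G * mat_trace (\<lambda>i j. Dv i j z)"
    by (simp add: sum.distrib V mat_trace_def sum_distrib_left)
  have second: "(\<Sum>j\<in>UNIV. V * v j z * g j z) = (dh z)^3 * G\<^sup>2"
    unfolding V v_def G_def vec_norm2_def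
    by (simp add: sum_distrib_left power2_eq_square power3_eq_cube ac_simps)
  have "div_flux z = (\<Sum>j\<in>UNIV. 2 * (\<Sum>i\<in>UNIV. v i z * Dv i j z) * v j z + V * Dv j j z) / \<sigma> z
      - (\<Sum>j\<in>UNIV. V * v j z * g j z) / (\<sigma> z)\<^sup>2"
    unfolding div_flux_def pdx_flux[OF z] V_def
    by (simp add: sum_subtractf sum_divide_distrib)
  also have "\<dots> = (2 * (dh z)\<^sup>2 * P + (dh z)\<^sup>2 * G * mat_trace (\<lambda>i j. Dv i j z)) / \<sigma> z
      - (dh z)^3 * G\<^sup>2 / (\<sigma> z)\<^sup>2"
    unfolding first second ..
  also have "\<dots> = dh z * k * (2 * P + G * mat_trace (\<lambda>i j. Dv i j z) - k * G\<^sup>2)"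
    using \<sigma>_pos[OF z] unfolding k_def by (simp add: field_simps power2_eq_square power3_eq_cube)
  finally show ?thesis
    by (simp add: G_def P_def)
qed

lemma continuous_on_dh: "continuous_on U dh"
  using continuous_on_deriv_h_rho[of 1] by (simp add: dh_def[abs_def])

lemma continuous_on_h_rho: "continuous_on U (\<lambda>z. h (\<rho> z))"
  using continuous_on_deriv_h_rho[of 0] by simp

lemma continuous_on_ddh: "continuous_on U ddh"
  using continuous_on_deriv_h_rho[of 2] by (simp add: ddh_def[abs_def] numeral_2_eq_2)

lemma continuous_on_\<sigma>: "continuous_on U \<sigma>"
  unfolding \<sigma>_def[abs_def] by (intro continuous_intros continuous_on_rho)

lemma continuous_on_g: "continuous_on U (g i)"
  unfolding g_def[abs_def]
  by (intro continuous_intros continuous_on_drho continuous_on_\<sigma>) (auto dest: \<sigma>_pos)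

lemma continuous_on_v: "continuous_on U (v i)"
  unfolding v_def[abs_def] by (intro continuous_intros continuous_on_dh continuous_on_g)

lemma continuous_on_H\<sigma>: "continuous_on U (H\<sigma> i j)"
  unfolding H\<sigma>_def[abs_def]
  by (intro continuous_intros continuous_on_ddrho continuous_on_g continuous_on_\<sigma>)
    (auto dest: \<sigma>_pos)

lemma continuous_on_Dv: "continuous_on U (Dv i j)"
  unfolding Dv_def[abs_def]
  by (intro continuous_intros continuous_on_dh continuous_on_ddh continuous_on_drho continuous_on_g
      continuous_on_H\<sigma>)

lemma continuous_on_H\<phi>: "continuous_on U (H\<phi> i j)"
  unfolding H\<phi>_def[abs_def]
  by (intro continuous_intros continuous_on_Dv continuous_on_v continuous_on_g continuous_on_\<sigma>)
    (auto dest: \<sigma>_pos)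

lemma continuous_on_flux: "continuous_on U (flux j)"
  unfolding flux_def[abs_def] vec_norm2_def
  by (intro continuous_intros continuous_on_v continuous_on_\<sigma>) (auto dest: \<sigma>_pos)

lemma continuous_on_pdx_flux: "continuous_on U (pdx j (flux j))"
proof (rule continuous_on_cong[THEN iffD2, OF refl])
  show "continuous_on U (\<lambda>z. (2 * (\<Sum>i\<in>UNIV. v i z * Dv i j z) * v j z
      + vec_norm2 (\<lambda>i. v i z) * Dv j j z) / \<sigma> z - vec_norm2 (\<lambda>i. v i z) * v j z * g j z / (\<sigma> z)\<^sup>2)"
    unfolding vec_norm2_def
    by (intro continuous_intros continuous_on_v continuous_on_Dv continuous_on_g continuous_on_\<sigma>)
      (auto dest: \<sigma>_pos)
qed (simp add: pdx_flux)

lemma flux_periodic: "z \<in> U \<Longrightarrow> flux j (z + space_axis i) = flux j z"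
  by (simp add: flux_def v_def g_def dh_def \<sigma>_def rho_periodic drho_periodic)

lemma continuous_on_slice: "continuous_on U f \<Longrightarrow> t \<in> {0<..<T} \<Longrightarrow> continuous_on UNIV (\<lambda>x. f (t, x))"
  by (rule continuous_on_compose2[where f="\<lambda>x. (t, x)"]) (auto intro!: continuous_intros simp: U_def)

lemma integrable_slice:
  fixes f :: "real \<times> (real^'n) \<Rightarrow> real"
  assumes "continuous_on U f" "t \<in> {0<..<T}"
  shows "(\<lambda>x. f (t, x)) integrable_on cbox 0 One"
  by (rule integrable_continuous, rule continuous_on_subset[OF continuous_on_slice[OF assms]]) simp

lemma integral_div_flux_slice_eq_0:
  assumes t: "t \<in> {0<..<T}"
  shows "integral (cbox 0 One) (\<lambda>x. div_flux (t, x)) = 0"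
proof -
  have "integral (cbox 0 One) (\<lambda>x. pdx j (flux j) (t, x)) = 0" for j
  proof (rule integral_cube_derivative_periodic[where G="\<lambda>x. flux j (t, x)" and e="axis j 1"])
    show "continuous_on UNIV (\<lambda>x. flux j (t, x))"
      by (rule continuous_on_slice[OF continuous_on_flux t])
    show "continuous_on UNIV (\<lambda>x. pdx j (flux j) (t, x))"
      by (rule continuous_on_slice[OF continuous_on_pdx_flux t])
    show "flux j (t, x + axis j 1) = flux j (t, x)" for x
      using flux_periodic[of "(t, x)" j j] t by (simp add: U_def space_axis_def)
    show "((\<lambda>s. flux j (t, x + s *\<^sub>R axis j 1)) has_real_derivative pdx j (flux j) (t, x)) (at 0)" for x
      using pdx_has_real_derivative_along_axis[OF x_differentiable_flux, of "(t, x)" j j] t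
      by (simp add: U_def)
  qed simp
  then show ?thesis
    unfolding div_flux_def
    by (subst integral_sum) (auto intro: integrable_slice[OF continuous_on_pdx_flux t])
qed

lemma pdx_sqrt_rho: "z \<in> U \<Longrightarrow> pdx i (\<lambda>y. sqrt (\<rho> y)) z = g i z"
  using pdx_\<sigma> by (simp add: \<sigma>_def[abs_def])

lemma jac_norm2_dh_grad_sqrt_rho:
  assumes z: "z \<in> U"
  shows "jac_norm2 (\<lambda>i w. deriv h (\<rho> w) * pdx i (\<lambda>y. sqrt (\<rho> y)) w) z = mat_norm2 (\<lambda>i j. Dv i j z)"
proof -
  have "pdx j (\<lambda>w. deriv h (\<rho> w) * pdx i (\<lambda>y. sqrt (\<rho> y)) w) z = pdx j (v i) z" for i j
    using pdx_sqrt_rho[OF slice_in_U[OF z]] by (intro pdx_cong) (simp add: v_def dh_def)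
  then show ?thesis
    by (simp add: jac_norm2_def mat_norm2_def pdx_v[OF z])
qed

lemma grad_norm2_sqrt_rho: "z \<in> U \<Longrightarrow> grad_norm2 (\<lambda>y. sqrt (\<rho> y)) z = vec_norm2 (\<lambda>i. g i z)"
  by (simp add: grad_norm2_def vec_norm2_def pdx_sqrt_rho)

lemma hess_norm2_sqrt_rho:
  assumes z: "z \<in> U"
  shows "hess_norm2 (\<lambda>y. sqrt (\<rho> y)) z = mat_norm2 (\<lambda>i j. H\<sigma> i j z)"
proof -
  have "pdx j (pdx i (\<lambda>y. sqrt (\<rho> y))) z = pdx j (g i) z" for i j
    using pdx_sqrt_rho[OF slice_in_U[OF z]] by (intro pdx_cong) simp
  then show ?thesis
    by (simp add: hess_norm2_def jac_norm2_def mat_norm2_def pdx_g[OF z])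
qed

lemma pdx_phi_rho: "z \<in> U \<Longrightarrow> pdx i (\<lambda>y. \<phi> (\<rho> y)) z = 2 * v i z / \<sigma> z"
  using pdx_chain[OF x_differentiable_rho phi_has_derivative[OF rho_pos]] pdx_rho \<sigma>_pos \<sigma>_squared
  by (simp add: v_def g_def dh_def field_simps power2_eq_square)

lemma hess_norm2_phi_rho:
  assumes z: "z \<in> U"
  shows "hess_norm2 (\<lambda>y. \<phi> (\<rho> y)) z = mat_norm2 (\<lambda>i j. H\<phi> i j z)"
proof -
  have nz: "\<sigma> z \<noteq> 0"
    using \<sigma>_pos[OF z] by simp
  have two_v: "x_differentiable (\<lambda>w. 2 * v i w) z" "pdx j (\<lambda>w. 2 * v i w) z = 2 * Dv i j z" for i j
    using x_differentiable_mult[OF x_differentiable_const x_differentiable_v[OF z]]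
      pdx_mult[OF x_differentiable_const x_differentiable_v[OF z]]
    by (simp_all add: pdx_const pdx_v[OF z])
  have "pdx j (pdx i (\<lambda>y. \<phi> (\<rho> y))) z = pdx j (\<lambda>w. 2 * v i w / \<sigma> w) z" for i j
    using pdx_phi_rho[OF slice_in_U[OF z]] by (intro pdx_cong) simp
  also have "pdx j (\<lambda>w. 2 * v i w / \<sigma> w) z = H\<phi> i j z" for i j
    unfolding pdx_divide[OF two_v(1) x_differentiable_\<sigma>[OF z] nz] two_v(2) pdx_\<sigma>[OF z]
    using nz by (simp add: H\<phi>_def field_simps power2_eq_square)
  finally show ?thesis
    by (simp add: hess_norm2_def jac_norm2_def mat_norm2_def)
qed

lemma grad_norm2_rho_quarter:
  assumes z: "z \<in> U"
  shows "grad_norm2 (\<lambda>y. \<rho> y powr (1/4)) z = vec_norm2 (\<lambda>i. g i z) / (4 * \<sigma> z)"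
proof -
  have quarter: "\<rho> w powr (1/4) = sqrt (\<sigma> w)" if "w \<in> U" for w
  proof -
    have "sqrt (\<sigma> w) = (\<rho> w powr (1/2)) powr (1/2)"
      using rho_pos[OF that] by (simp add: \<sigma>_def powr_half_sqrt)
    then show ?thesis
      by (simp add: powr_powr)
  qed
  have "pdx i (\<lambda>y. \<rho> y powr (1/4)) z = pdx i (\<lambda>y. sqrt (\<sigma> y)) z" for i
    using quarter[OF slice_in_U[OF z]] by (intro pdx_cong) simp
  also have "pdx i (\<lambda>y. sqrt (\<sigma> y)) z = inverse (sqrt (\<sigma> z)) / 2 * g i z" for i
    using pdx_chain[OF x_differentiable_\<sigma>[OF z] DERIV_real_sqrt[OF \<sigma>_pos[OF z]]]
    unfolding pdx_\<sigma>[OF z] .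
  finally have pdx_quarter: "pdx i (\<lambda>y. \<rho> y powr (1/4)) z = inverse (sqrt (\<sigma> z)) / 2 * g i z" for i .
  have "(pdx i (\<lambda>y. \<rho> y powr (1/4)) z)\<^sup>2 = (g i z)\<^sup>2 / (4 * \<sigma> z)" for i
    unfolding pdx_quarter using \<sigma>_pos[OF z] by (simp add: power_mult_distrib power_divide power_inverse field_simps)
  then show ?thesis
    by (simp add: grad_norm2_def vec_norm2_def sum_divide_distrib)
qed

lemma dh_defect_le_h_hess_phi:
  assumes z: "z \<in> U"
  shows "dh z * mat_norm2 (\<lambda>i j. Dv i j z - dh z / \<sigma> z * (g i z * g j z))
    \<le> C0 / 4 * (h (\<rho> z) * mat_norm2 (\<lambda>i j. H\<phi> i j z))"
proof -
  define M where "M = mat_norm2 (\<lambda>i j. Dv i j z - dh z / \<sigma> z * (g i z * g j z))"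
  have "(\<lambda>i j. H\<phi> i j z) = (\<lambda>i j. 2 / \<sigma> z * (Dv i j z - dh z / \<sigma> z * (g i z * g j z)))"
    by (simp add: fun_eq_iff H\<phi>_def v_def diff_divide_distrib right_diff_distrib)
  then have "mat_norm2 (\<lambda>i j. H\<phi> i j z) = (2 / \<sigma> z)\<^sup>2 * M"
    by (simp only: M_def mat_norm2_scale)
  then have H\<phi>: "mat_norm2 (\<lambda>i j. H\<phi> i j z) = 4 * M / \<rho> z"
    using \<sigma>_squared[OF z] by (simp add: power_divide)
  have "dh z * M = (dh z * \<rho> z) * M / \<rho> z"
    using rho_pos[OF z] by simp
  also have "\<dots> \<le> (C0 * h (\<rho> z)) * M / \<rho> z"
    using h_bounds(3)[OF rho_pos[OF z]] rho_pos[OF z] mat_norm2_nonneg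
    by (intro divide_right_mono mult_right_mono) (auto simp: dh_def M_def)
  finally show ?thesis
    by (simp add: H\<phi> M_def)
qed

lemma first_integrand_le:
  assumes card: "CARD('n) \<le> 3" and z: "z \<in> U"
  shows "dh z * mat_norm2 (\<lambda>i j. Dv i j z) + (dh z)^3 * (vec_norm2 (\<lambda>i. g i z))\<^sup>2 / \<rho> z
    \<le> 5/2 * C0 * (h (\<rho> z) * mat_norm2 (\<lambda>i j. H\<phi> i j z)) + 10/3 * div_flux z"
proof -
  define k where "k = dh z / \<sigma> z"
  define G where "G = vec_norm2 (\<lambda>i. g i z)"
  have "(dh z)^3 * G\<^sup>2 / \<rho> z = dh z * (k\<^sup>2 * G\<^sup>2)"
    using \<sigma>_squared[OF z] \<sigma>_pos[OF z] by (simp add: k_def power2_eq_square power3_eq_cube)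
  moreover have "dh z * (mat_norm2 (\<lambda>i j. Dv i j z) + k\<^sup>2 * G\<^sup>2)
      \<le> dh z * (10 * mat_norm2 (\<lambda>i j. Dv i j z - k * (g i z * g j z))
        + 10/3 * k * (2 * quad_form (\<lambda>i j. Dv i j z) (\<lambda>i. g i z)
          + G * mat_trace (\<lambda>i j. Dv i j z) - k * G\<^sup>2))"
    using mat_norm2_le_rank_one_defect[OF card] dh_pos[OF z]
    by (intro mult_left_mono) (simp_all add: G_def)
  moreover have "10 * (dh z * mat_norm2 (\<lambda>i j. Dv i j z - k * (g i z * g j z)))
      \<le> 5/2 * C0 * (h (\<rho> z) * mat_norm2 (\<lambda>i j. H\<phi> i j z))"
    using dh_defect_le_h_hess_phi[OF z] by (simp add: k_def)
  ultimately show ?thesis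
    unfolding div_flux_eq[OF z] G_def[symmetric] k_def[symmetric]
    by (simp add: algebra_simps)
qed

lemma second_integrand_le:
  assumes card: "CARD('n) \<le> 3" and z: "z \<in> U" and c: "0 < c" "\<forall>s>0. c \<le> deriv h s"
  shows "mat_norm2 (\<lambda>i j. H\<sigma> i j z) + (vec_norm2 (\<lambda>i. g i z) / (4 * \<sigma> z))\<^sup>2
    \<le> (3 + 8 * C0\<^sup>2) / c^3 * (5/2 * C0 * (h (\<rho> z) * mat_norm2 (\<lambda>i j. H\<phi> i j z)) + 10/3 * div_flux z)"
proof -
  have "dh z * H\<sigma> i j z = Dv i j z - 2 * ddh z * \<sigma> z * (g i z * g j z)" for i j
    using \<sigma>_pos[OF z] by (simp add: Dv_def g_def field_simps)
  moreover have "\<bar>ddh z\<bar> * (\<sigma> z)\<^sup>2 \<le> C0 * dh z"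
    using h_bounds(4)[OF rho_pos[OF z]] by (simp add: \<sigma>_squared[OF z] ddh_def dh_def)
  ultimately have "mat_norm2 (\<lambda>i j. H\<sigma> i j z) + (vec_norm2 (\<lambda>i. g i z) / (4 * \<sigma> z))\<^sup>2
      \<le> (3 + 8 * C0\<^sup>2) / c^3 * (dh z * mat_norm2 (\<lambda>i j. Dv i j z)
        + (dh z)^3 * (vec_norm2 (\<lambda>i. g i z))\<^sup>2 / (\<sigma> z)\<^sup>2)"
    using c rho_pos[OF z] \<sigma>_pos[OF z]
    by (intro mat_norm2_plus_vec_norm2_le_of_rank_one_correction) (auto simp: dh_def)
  also have "\<dots> \<le> (3 + 8 * C0\<^sup>2) / c^3 * (5/2 * C0 * (h (\<rho> z) * mat_norm2 (\<lambda>i j. H\<phi> i j z)) + 10/3 * div_flux z)"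
    using first_integrand_le[OF card z] c by (intro mult_left_mono) (simp_all add: \<sigma>_squared[OF z])
  finally show ?thesis .
qed

lemma continuous_on_div_flux: "continuous_on U div_flux"
  unfolding div_flux_def[abs_def] by (intro continuous_on_sum continuous_on_pdx_flux)

lemma cyl_sets: "cyl T \<in> sets (borel :: (real \<times> (real^'n)) measure)"
proof -
  have "cyl T = U \<inter> (UNIV \<times> cbox 0 One)"
    unfolding cyl_def U_def by auto
  moreover have "UNIV \<times> cbox (0::real^'n) One \<in> sets borel"
    by (intro borel_closed closed_Times) auto
  moreover have "U \<in> sets borel"
    using open_U by simp
  ultimately show ?thesis
    by (metis sets.Int)
qed

lemma borel_measurable_cyl_integrand:
  fixes f :: "real \<times> (real^'n) \<Rightarrow> real"
  assumes "continuous_on U f"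
  shows "(\<lambda>z. ennreal (f z) * indicator (cyl T) z) \<in> borel_measurable lborel"
proof -
  have "(\<lambda>z. indicator (cyl T) z *\<^sub>R f z) \<in> borel_measurable borel"
    by (rule borel_measurable_continuous_on_indicator[OF cyl_sets
          continuous_on_subset[OF assms cyl_subset_U]])
  then have "(\<lambda>z. ennreal (indicator (cyl T) z *\<^sub>R f z)) \<in> borel_measurable borel"
    by measurable
  moreover have "ennreal (indicator (cyl T) z *\<^sub>R f z) = ennreal (f z) * indicator (cyl T) z" for z
    by (simp add: indicator_def)
  ultimately show ?thesis
    by simp
qed

lemma nn_integral_cyl_cong:
  assumes "\<And>z. z \<in> U \<Longrightarrow> f z = f' z"
  shows "(\<integral>\<^sup>+ z \<in> cyl T. ennreal (f z) \<partial>lborel) = (\<integral>\<^sup>+ z \<in> cyl T. ennreal (f' z) \<partial>lborel)"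
  using assms cyl_subset_U by (intro nn_integral_cong) (auto simp: indicator_def)

lemma nn_integral_cyl_slices:
  fixes f :: "real \<times> (real^'n) \<Rightarrow> real"
  assumes cont: "continuous_on U f" and nonneg: "\<And>z. z \<in> U \<Longrightarrow> 0 \<le> f z"
  shows "(\<integral>\<^sup>+ z \<in> cyl T. ennreal (f z) \<partial>lborel)
    = (\<integral>\<^sup>+ t \<in> {0<..<T}. ennreal (integral (cbox 0 One) (\<lambda>x. f (t, x))) \<partial>lborel)"
proof -
  have "(\<lambda>z. ennreal (f z) * indicator (cyl T) z) \<in> borel_measurable (lborel \<Otimes>\<^sub>M lborel)"
    using borel_measurable_cyl_integrand[OF cont] by (simp add: lborel_prod)
  from lborel.nn_integral_fst[OF this]
  have "(\<integral>\<^sup>+ z \<in> cyl T. ennreal (f z) \<partial>lborel)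
      = (\<integral>\<^sup>+ t. \<integral>\<^sup>+ x. ennreal (f (t, x)) * indicator (cyl T) (t, x) \<partial>lborel \<partial>lborel)"
    by (simp add: lborel_prod)
  also have "\<dots> = (\<integral>\<^sup>+ t \<in> {0<..<T}. ennreal (integral (cbox 0 One) (\<lambda>x. f (t, x))) \<partial>lborel)"
  proof (intro nn_integral_cong)
    fix t
    show "(\<integral>\<^sup>+ x. ennreal (f (t, x)) * indicator (cyl T) (t, x) \<partial>lborel)
        = ennreal (integral (cbox 0 One) (\<lambda>x. f (t, x))) * indicator {0<..<T} t"
    proof (cases "t \<in> {0<..<T}")
      case True
      have "(\<integral>\<^sup>+ x. ennreal (f (t, x)) * indicator (cyl T) (t, x) \<partial>lborel)
          = (\<integral>\<^sup>+ x. ennreal (f (t, x)) * indicator (cbox 0 One) x \<partial>lborel)"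
        using True by (intro nn_integral_cong) (simp add: cyl_def indicator_def)
      also have "\<dots> = ennreal (integral (cbox 0 One) (\<lambda>x. f (t, x)))"
        using nonneg True integrable_slice[OF cont True]
        by (intro nn_integral_has_integral_lebesgue') (auto simp: U_def)
      finally show ?thesis
        using True by simp
    next
      case False
      then have "(\<lambda>x. ennreal (f (t, x)) * indicator (cyl T) (t, x)) = (\<lambda>x. 0)"
        by (auto simp: cyl_def indicator_def fun_eq_iff)
      with False show ?thesis
        by simp
    qed
  qed
  finally show ?thesis .
qed

lemma nn_integral_cyl_le_mod_div_flux:
  fixes f R :: "real \<times> (real^'n) \<Rightarrow> real"
  assumes f: "continuous_on U f" "\<And>z. z \<in> U \<Longrightarrow> 0 \<le> f z"
    and R: "continuous_on U R" "\<And>z. z \<in> U \<Longrightarrow> 0 \<le> R z" and A: "0 \<le> A"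
    and le: "\<And>z. z \<in> U \<Longrightarrow> f z \<le> A * R z + c * div_flux z"
  shows "(\<integral>\<^sup>+ z \<in> cyl T. ennreal (f z) \<partial>lborel) \<le> ennreal A * (\<integral>\<^sup>+ z \<in> cyl T. ennreal (R z) \<partial>lborel)"
proof -
  have AR: "continuous_on U (\<lambda>z. A * R z)" "\<And>z. z \<in> U \<Longrightarrow> 0 \<le> A * R z"
    using R A by (auto intro!: continuous_intros)
  have slice: "integral (cbox 0 One) (\<lambda>x. f (t, x)) \<le> integral (cbox 0 One) (\<lambda>x. A * R (t, x))"
    if t: "t \<in> {0<..<T}" for t
  proof -
    have cdiv: "continuous_on U (\<lambda>z. c * div_flux z)"
      by (intro continuous_intros continuous_on_div_flux)
    have "integral (cbox 0 One) (\<lambda>x. f (t, x)) \<le> integral (cbox 0 One) (\<lambda>x. A * R (t, x) + c * div_flux (t, x))"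
      using le t integrable_slice[OF f(1) t] integrable_add[OF integrable_slice[OF AR(1) t] integrable_slice[OF cdiv t]]
      by (intro integral_le) (auto simp: U_def)
    also have "\<dots> = integral (cbox 0 One) (\<lambda>x. A * R (t, x)) + c * integral (cbox 0 One) (\<lambda>x. div_flux (t, x))"
      using integrable_slice[OF AR(1) t] integrable_slice[OF cdiv t]
        integrable_slice[OF continuous_on_div_flux t]
      by (simp add: integral_add)
    finally show ?thesis
      by (simp add: integral_div_flux_slice_eq_0[OF t])
  qed
  have "(\<integral>\<^sup>+ z \<in> cyl T. ennreal (f z) \<partial>lborel)
      = (\<integral>\<^sup>+ t \<in> {0<..<T}. ennreal (integral (cbox 0 One) (\<lambda>x. f (t, x))) \<partial>lborel)"
    by (rule nn_integral_cyl_slices[OF f])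
  also have "\<dots> \<le> (\<integral>\<^sup>+ t \<in> {0<..<T}. ennreal (integral (cbox 0 One) (\<lambda>x. A * R (t, x))) \<partial>lborel)"
    using slice by (intro nn_integral_mono) (simp add: indicator_def ennreal_leI)
  also have "\<dots> = (\<integral>\<^sup>+ z \<in> cyl T. ennreal (A * R z) \<partial>lborel)"
    by (rule nn_integral_cyl_slices[OF AR, symmetric])
  also have "\<dots> = (\<integral>\<^sup>+ z. ennreal A * (ennreal (R z) * indicator (cyl T) z) \<partial>lborel)"
    using A R(2) cyl_subset_U by (intro nn_integral_cong) (auto simp: indicator_def ennreal_mult)
  also have "\<dots> = ennreal A * (\<integral>\<^sup>+ z \<in> cyl T. ennreal (R z) \<partial>lborel)"
    by (rule nn_integral_cmult[OF borel_measurable_cyl_integrand[OF R(1)]])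
  finally show ?thesis .
qed

lemma nn_integral_cyl_add_le_mod_div_flux:
  fixes f1 f2 R :: "real \<times> (real^'n) \<Rightarrow> real"
  assumes f1: "continuous_on U f1" "\<And>z. z \<in> U \<Longrightarrow> 0 \<le> f1 z"
    and f2: "continuous_on U f2" "\<And>z. z \<in> U \<Longrightarrow> 0 \<le> f2 z"
    and R: "continuous_on U R" "\<And>z. z \<in> U \<Longrightarrow> 0 \<le> R z" and A: "0 \<le> A"
    and le: "\<And>z. z \<in> U \<Longrightarrow> f1 z + f2 z \<le> A * R z + c * div_flux z"
  shows "(\<integral>\<^sup>+ z \<in> cyl T. ennreal (f1 z) \<partial>lborel) + (\<integral>\<^sup>+ z \<in> cyl T. ennreal (f2 z) \<partial>lborel)
    \<le> ennreal (2 * A) * (\<integral>\<^sup>+ z \<in> cyl T. ennreal (R z) \<partial>lborel)"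
proof -
  have "(\<integral>\<^sup>+ z \<in> cyl T. ennreal (f1 z) \<partial>lborel) + (\<integral>\<^sup>+ z \<in> cyl T. ennreal (f2 z) \<partial>lborel)
      \<le> ennreal A * (\<integral>\<^sup>+ z \<in> cyl T. ennreal (R z) \<partial>lborel) + ennreal A * (\<integral>\<^sup>+ z \<in> cyl T. ennreal (R z) \<partial>lborel)"
  proof (intro add_mono)
    have le1: "f1 z \<le> A * R z + c * div_flux z" and le2: "f2 z \<le> A * R z + c * div_flux z"
      if "z \<in> U" for z
      using le[OF that] f1(2)[OF that] f2(2)[OF that] by linarith+
    show "(\<integral>\<^sup>+ z \<in> cyl T. ennreal (f1 z) \<partial>lborel) \<le> ennreal A * (\<integral>\<^sup>+ z \<in> cyl T. ennreal (R z) \<partial>lborel)"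
      by (rule nn_integral_cyl_le_mod_div_flux[OF f1 R A le1])
    show "(\<integral>\<^sup>+ z \<in> cyl T. ennreal (f2 z) \<partial>lborel) \<le> ennreal A * (\<integral>\<^sup>+ z \<in> cyl T. ennreal (R z) \<partial>lborel)"
      by (rule nn_integral_cyl_le_mod_div_flux[OF f2 R A le2])
  qed
  also have "\<dots> = ennreal (2 * A) * (\<integral>\<^sup>+ z \<in> cyl T. ennreal (R z) \<partial>lborel)"
    unfolding mult_2 ennreal_plus[OF A A] distrib_right ..
  finally show ?thesis .
qed

lemma continuous_on_h_mat_norm2_H\<phi>: "continuous_on U (\<lambda>z. h (\<rho> z) * mat_norm2 (\<lambda>i j. H\<phi> i j z))"
  unfolding mat_norm2_def by (intro continuous_intros continuous_on_h_rho continuous_on_H\<phi>)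

lemma h_mat_norm2_H\<phi>_nonneg: "z \<in> U \<Longrightarrow> 0 \<le> h (\<rho> z) * mat_norm2 (\<lambda>i j. H\<phi> i j z)"
  by (rule mult_nonneg_nonneg[OF h_bounds(1)[OF rho_pos] mat_norm2_nonneg])

lemma nn_integral_h_hess_norm2_phi_rho:
  "(\<integral>\<^sup>+ z \<in> cyl T. ennreal (h (\<rho> z) * hess_norm2 (\<lambda>y. \<phi> (\<rho> y)) z) \<partial>lborel)
    = (\<integral>\<^sup>+ z \<in> cyl T. ennreal (h (\<rho> z) * mat_norm2 (\<lambda>i j. H\<phi> i j z)) \<partial>lborel)"
  by (intro nn_integral_cyl_cong) (simp add: hess_norm2_phi_rho)

lemma first_estimate:
  assumes card: "CARD('n) \<le> 3"
  shows "(\<integral>\<^sup>+ z \<in> cyl T. ennreal (deriv h (\<rho> z) *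
              jac_norm2 (\<lambda>i w. deriv h (\<rho> w) * pdx i (\<lambda>y. sqrt (\<rho> y)) w) z) \<partial>lborel)
        + (\<integral>\<^sup>+ z \<in> cyl T. ennreal ((deriv h (\<rho> z))^3 *
              (grad_norm2 (\<lambda>y. sqrt (\<rho> y)) z)\<^sup>2 / \<rho> z) \<partial>lborel)
      \<le> ennreal (5 * C0) * (\<integral>\<^sup>+ z \<in> cyl T. ennreal (h (\<rho> z) * hess_norm2 (\<lambda>y. \<phi> (\<rho> y)) z) \<partial>lborel)"
proof -
  have "continuous_on U (\<lambda>z. dh z * mat_norm2 (\<lambda>i j. Dv i j z))"
    unfolding mat_norm2_def by (intro continuous_intros continuous_on_dh continuous_on_Dv)
  moreover have "continuous_on U (\<lambda>z. (dh z)^3 * (vec_norm2 (\<lambda>i. g i z))\<^sup>2 / \<rho> z)"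
    unfolding vec_norm2_def
    by (intro continuous_intros continuous_on_dh continuous_on_g continuous_on_rho) (auto dest: rho_pos)
  moreover have "0 \<le> dh z * mat_norm2 (\<lambda>i j. Dv i j z)" "0 \<le> (dh z)^3 * (vec_norm2 (\<lambda>i. g i z))\<^sup>2 / \<rho> z"
    if "z \<in> U" for z
    using dh_pos[OF that] rho_pos[OF that] mat_norm2_nonneg[of "\<lambda>i j. Dv i j z"] by simp_all
  ultimately have "(\<integral>\<^sup>+ z \<in> cyl T. ennreal (dh z * mat_norm2 (\<lambda>i j. Dv i j z)) \<partial>lborel)
      + (\<integral>\<^sup>+ z \<in> cyl T. ennreal ((dh z)^3 * (vec_norm2 (\<lambda>i. g i z))\<^sup>2 / \<rho> z) \<partial>lborel)
      \<le> ennreal (2 * (5/2 * C0)) * (\<integral>\<^sup>+ z \<in> cyl T. ennreal (h (\<rho> z) * mat_norm2 (\<lambda>i j. H\<phi> i j z)) \<partial>lborel)"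
    using C0_pos
    by (intro nn_integral_cyl_add_le_mod_div_flux[OF _ _ _ _ continuous_on_h_mat_norm2_H\<phi>
          h_mat_norm2_H\<phi>_nonneg _ first_integrand_le[OF card]]) simp_all
  moreover have "(\<integral>\<^sup>+ z \<in> cyl T. ennreal (deriv h (\<rho> z) *
        jac_norm2 (\<lambda>i w. deriv h (\<rho> w) * pdx i (\<lambda>y. sqrt (\<rho> y)) w) z) \<partial>lborel)
      = (\<integral>\<^sup>+ z \<in> cyl T. ennreal (dh z * mat_norm2 (\<lambda>i j. Dv i j z)) \<partial>lborel)"
    by (intro nn_integral_cyl_cong) (simp add: jac_norm2_dh_grad_sqrt_rho dh_def)
  moreover have "(\<integral>\<^sup>+ z \<in> cyl T. ennreal ((deriv h (\<rho> z))^3 * (grad_norm2 (\<lambda>y. sqrt (\<rho> y)) z)\<^sup>2 / \<rho> z) \<partial>lborel)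
      = (\<integral>\<^sup>+ z \<in> cyl T. ennreal ((dh z)^3 * (vec_norm2 (\<lambda>i. g i z))\<^sup>2 / \<rho> z) \<partial>lborel)"
    by (intro nn_integral_cyl_cong) (simp add: grad_norm2_sqrt_rho dh_def)
  ultimately show ?thesis
    by (simp add: nn_integral_h_hess_norm2_phi_rho)
qed

lemma second_estimate:
  assumes card: "CARD('n) \<le> 3" and c: "0 < c" "\<forall>s>0. c \<le> deriv h s"
  defines "K \<equiv> (3 + 8 * C0\<^sup>2) / c^3"
  shows "(\<integral>\<^sup>+ z \<in> cyl T. ennreal (hess_norm2 (\<lambda>y. sqrt (\<rho> y)) z) \<partial>lborel)
        + (\<integral>\<^sup>+ z \<in> cyl T. ennreal ((grad_norm2 (\<lambda>y. \<rho> y powr (1/4)) z)\<^sup>2) \<partial>lborel)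
      \<le> ennreal (2 * (K * (5/2 * C0)))
        * (\<integral>\<^sup>+ z \<in> cyl T. ennreal (h (\<rho> z) * hess_norm2 (\<lambda>y. \<phi> (\<rho> y)) z) \<partial>lborel)"
proof -
  have K: "0 \<le> K"
    using c by (simp add: K_def)
  have "continuous_on U (\<lambda>z. mat_norm2 (\<lambda>i j. H\<sigma> i j z))"
    unfolding mat_norm2_def by (intro continuous_intros continuous_on_H\<sigma>)
  moreover have "continuous_on U (\<lambda>z. (vec_norm2 (\<lambda>i. g i z) / (4 * \<sigma> z))\<^sup>2)"
    unfolding vec_norm2_def
    by (intro continuous_intros continuous_on_g continuous_on_\<sigma>) (auto dest: \<sigma>_pos)
  moreover have pointwise: "mat_norm2 (\<lambda>i j. H\<sigma> i j z) + (vec_norm2 (\<lambda>i. g i z) / (4 * \<sigma> z))\<^sup>2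
      \<le> K * (5/2 * C0) * (h (\<rho> z) * mat_norm2 (\<lambda>i j. H\<phi> i j z)) + K * (10/3) * div_flux z"
    if "z \<in> U" for z
    using second_integrand_le[OF card that c] unfolding K_def by (simp only: distrib_left mult.assoc)
  ultimately have "(\<integral>\<^sup>+ z \<in> cyl T. ennreal (mat_norm2 (\<lambda>i j. H\<sigma> i j z)) \<partial>lborel)
      + (\<integral>\<^sup>+ z \<in> cyl T. ennreal ((vec_norm2 (\<lambda>i. g i z) / (4 * \<sigma> z))\<^sup>2) \<partial>lborel)
      \<le> ennreal (2 * (K * (5/2 * C0))) * (\<integral>\<^sup>+ z \<in> cyl T. ennreal (h (\<rho> z) * mat_norm2 (\<lambda>i j. H\<phi> i j z)) \<partial>lborel)"
    using C0_pos K
    by (intro nn_integral_cyl_add_le_mod_div_flux[OF _ _ _ _ continuous_on_h_mat_norm2_H\<phi>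
          h_mat_norm2_H\<phi>_nonneg _ pointwise]) (simp_all add: mat_norm2_nonneg)
  moreover have "(\<integral>\<^sup>+ z \<in> cyl T. ennreal (hess_norm2 (\<lambda>y. sqrt (\<rho> y)) z) \<partial>lborel)
      = (\<integral>\<^sup>+ z \<in> cyl T. ennreal (mat_norm2 (\<lambda>i j. H\<sigma> i j z)) \<partial>lborel)"
    by (intro nn_integral_cyl_cong) (simp add: hess_norm2_sqrt_rho)
  moreover have "(\<integral>\<^sup>+ z \<in> cyl T. ennreal ((grad_norm2 (\<lambda>y. \<rho> y powr (1/4)) z)\<^sup>2) \<partial>lborel)
      = (\<integral>\<^sup>+ z \<in> cyl T. ennreal ((vec_norm2 (\<lambda>i. g i z) / (4 * \<sigma> z))\<^sup>2) \<partial>lborel)"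
    by (intro nn_integral_cyl_cong) (simp add: grad_norm2_rho_quarter)
  ultimately show ?thesis
    by (simp add: nn_integral_h_hess_norm2_phi_rho)
qed

end

theorem lemma5p1:
  fixes C0 :: real
  assumes "CARD('n::finite) = 2 \<or> CARD('n) = 3"
  shows "(\<exists>C::real. \<forall>T (\<rho>::real \<times> (real^'n) \<Rightarrow> real) h \<phi>. hyps5p1 C0 T \<rho> h \<phi> \<longrightarrow>
            (\<integral>\<^sup>+ z \<in> cyl T. ennreal (deriv h (\<rho> z) *
                 jac_norm2 (\<lambda>i w. deriv h (\<rho> w) * pdx i (\<lambda>y. sqrt (\<rho> y)) w) z) \<partial>lborel)
          + (\<integral>\<^sup>+ z \<in> cyl T. ennreal ((deriv h (\<rho> z))^3 *
                 (grad_norm2 (\<lambda>y. sqrt (\<rho> y)) z)\<^sup>2 / \<rho> z) \<partial>lborel)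
          \<le> ennreal C * (\<integral>\<^sup>+ z \<in> cyl T. ennreal (h (\<rho> z) * hess_norm2 (\<lambda>y. \<phi> (\<rho> y)) z) \<partial>lborel))
       \<and> (\<forall>c>0. \<exists>C::real. \<forall>T (\<rho>::real \<times> (real^'n) \<Rightarrow> real) h \<phi>.
            hyps5p1 C0 T \<rho> h \<phi> \<and> (\<forall>s>0. c \<le> deriv h s) \<longrightarrow>
            (\<integral>\<^sup>+ z \<in> cyl T. ennreal (hess_norm2 (\<lambda>y. sqrt (\<rho> y)) z) \<partial>lborel)
          + (\<integral>\<^sup>+ z \<in> cyl T. ennreal ((grad_norm2 (\<lambda>y. \<rho> y powr (1/4)) z)\<^sup>2) \<partial>lborel)
          \<le> ennreal C * (\<integral>\<^sup>+ z \<in> cyl T. ennreal (h (\<rho> z) * hess_norm2 (\<lambda>y. \<phi> (\<rho> y)) z) \<partial>lborel))"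
proof -
  have card: "CARD('n) \<le> 3"
    using assms by auto
  show ?thesis
    using torus_density.first_estimate[OF torus_density.intro card]
      torus_density.second_estimate[OF torus_density.intro card]
    by blast
qed

end
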